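(* Let $G$ be a $(d+1)$-colourful graph on $[1..n]$ and let $\mathcal{I}\subseteq[1..d+1]$ with $|\mathcal{I}|=3$ be such that $|X(G_\mathcal{I})|$ is a disjoint union of $2$-spheres. Then there exist distinct $i,j\in\mathcal{I}$ such that $$\kappa_{i,j}-\kappa_\mathcal{I}\leq \frac{n}{6}.$$
   Context: A $(d+1)$-colourful graph of (even) order $n$ is a bipartite $(d+1)$-regular multigraph on $[1..n]$ whose edges are coloured with colours in $[1..d+1]$ so that each vertex is incident to exactly one edge of each colour. For $\mathcal{J}\subseteq[1..d+1]$, $G_\mathcal{J}$ is the graph on $[1..n]$ keeping only the edges with colours in $\mathcal{J}$, and $\kappa_\mathcal{J}$ is its number of connected components; $\kappa_{i,j}=\kappa_{\{i,j\}}$. For $|\mathcal{I}|=3$, $X(G_\mathcal{I})$ is the $2$-dimensional complex obtained by taking a triangle with vertices coloured by the three colours of $\mathcal{I}$ for each vertex of $G$, and for each edge $\{u,v\}$ of $G_\mathcal{I}$ of colour $i$ gluing the sides of the triangles of $u$ and $v$ whose endpoints are coloured $\mathcal{I}\setminus\{i\}$ by the colour-preserving isometry. *)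

theory Defs
  imports "HOL-Analysis.Analysis"
begin

text \<open>A (d+1)-colourful graph of order n on the vertex set {1..n}: for each colour
  c in {1..d+1}, the edges of colour c form a perfect matching, encoded by the
  partner function m c (a fixed-point-free involution of {1..n}); the multigraph
  (union of all colours) is bipartite.\<close>
definition colourful :: "nat \<Rightarrow> nat \<Rightarrow> (nat \<Rightarrow> nat \<Rightarrow> nat) \<Rightarrow> bool" where
  "colourful d n m \<longleftrightarrow>
     (\<forall>c\<in>{1..d+1}. \<forall>v\<in>{1..n}. m c v \<in> {1..n} \<and> m c v \<noteq> v \<and> m c (m c v) = v) \<and>
     (\<exists>S. \<forall>c\<in>{1..d+1}. \<forall>v\<in>{1..n}. (v \<in> S \<longleftrightarrow> m c v \<notin> S))"

definition edge_rel :: "nat \<Rightarrow> (nat \<Rightarrow> nat \<Rightarrow> nat) \<Rightarrow> nat set \<Rightarrow> (nat \<times> nat) set" where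
  "edge_rel n m J = {(v, m c v) | v c. v \<in> {1..n} \<and> c \<in> J}"

definition kappa :: "nat \<Rightarrow> (nat \<Rightarrow> nat \<Rightarrow> nat) \<Rightarrow> nat set \<Rightarrow> nat" where
  "kappa n m J = card ({1..n} // (edge_rel n m J)\<^sup>*)"

definition quotient_top :: "'a topology \<Rightarrow> ('a \<times> 'a) set \<Rightarrow> 'a set topology" where
  "quotient_top X r = topology (\<lambda>U. U \<subseteq> topspace X // r \<and> openin X (\<Union>U))"

text \<open>The triangle with vertices coloured by the colours in I, in barycentric
  coordinates (indexed by colours); its vertex coloured c is the point with
  coordinate 1 at c.\<close>
definition triangle :: "nat set \<Rightarrow> (nat \<Rightarrow> real) set" where
  "triangle I = {p. (\<forall>c. 0 \<le> p c) \<and> (\<forall>c. c \<notin> I \<longrightarrow> p c = 0) \<and> sum p I = 1}"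

definition triangles_space :: "nat \<Rightarrow> nat set \<Rightarrow> (nat \<times> (nat \<Rightarrow> real)) topology" where
  "triangles_space n I = subtopology (prod_topology (discrete_topology {1..n}) euclidean)
                            ({1..n} \<times> triangle I)"

text \<open>Gluing: for an edge {u, m i u} of colour i in I, the sides of the triangles of
  u and m i u opposite to the vertex coloured i (i.e. the points with p i = 0) are
  identified by the colour-preserving isometry, which is the identity in
  barycentric coordinates.\<close>
definition glue_rel :: "nat \<Rightarrow> (nat \<Rightarrow> nat \<Rightarrow> nat) \<Rightarrow> nat set
                       \<Rightarrow> ((nat \<times> (nat \<Rightarrow> real)) \<times> (nat \<times> (nat \<Rightarrow> real))) set" where
  "glue_rel n m I = {((u, p), (m i u, p)) | u p i. u \<in> {1..n} \<and> i \<in> I \<and> p \<in> triangle I \<and> p i = 0}"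

definition complex_X :: "nat \<Rightarrow> (nat \<Rightarrow> nat \<Rightarrow> nat) \<Rightarrow> nat set
                         \<Rightarrow> (nat \<times> (nat \<Rightarrow> real)) set topology" where
  "complex_X n m I = quotient_top (triangles_space n I)
      ((glue_rel n m I \<union> (glue_rel n m I)\<inverse>)\<^sup>*)"

definition disjoint_union_of_2spheres :: "'a topology \<Rightarrow> bool" where
  "disjoint_union_of_2spheres X \<longleftrightarrow>
     (\<forall>C \<in> connected_components_of X.
        subtopology X C homeomorphic_space top_of_set (sphere (0::real^3) 1))"

end

theory Submission
  imports Defs
begin

(* X(G_I) is a closed surface with kappa_{i,j} + kappa_{i,k} + kappa_{j,k} vertices, 3n/2 edges
   and n triangles, and each of its kappa_I components has Euler characteristic at most 2. Hence
   the three differences kappa_{i,j} - kappa_I etc. sum to at most n/2 - kappa_I, and one of them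
   is at most n/6.

   The Euler bound is proved combinatorially, by induction on n. Fix a vertex u and let v be its
   partner of colour k. Rematching colour i at u, i.e. replacing the i-edges u-a and v-b by u-v
   and a-b, does not increase the defect n + 4 kappa_I - 2 (kappa_{i,j} + kappa_{i,k} +
   kappa_{j,k}); neither does the same operation on colour j. Then all three colours join u to v,
   and deleting the pair {u, v} leaves the defect unchanged. *)

definition n_components :: "'a set \<Rightarrow> ('a \<times> 'a) set \<Rightarrow> nat" where
  "n_components V E = card (V // E\<^sup>*)"

abbreviation link :: "'a \<Rightarrow> 'a \<Rightarrow> ('a \<times> 'a) set" where
  "link x y \<equiv> {(x, y), (y, x)}"

lemma quotient_eq_image: "V // R = (\<lambda>z. R `` {z}) ` V"
  by (auto simp: quotient_def)

lemma equiv_rtrancl: "sym E \<Longrightarrow> equiv UNIV (E\<^sup>*)"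
  by (simp add: equiv_def refl_rtrancl sym_rtrancl trans_rtrancl)

lemma sym_Un_link: "sym E \<Longrightarrow> sym (E \<union> link x y)"
  by (auto simp: sym_def)

lemma rtrancl_Un_link:
  fixes x y :: 'a
  assumes "sym E"
  defines "C \<equiv> E\<^sup>* `` {x} \<union> E\<^sup>* `` {y}"
  shows "(E \<union> link x y)\<^sup>* = E\<^sup>* \<union> C \<times> C"
proof
  have symR: "sym (E\<^sup>*)"
    using assms(1) by (rule sym_rtrancl)
  show "(E \<union> link x y)\<^sup>* \<subseteq> E\<^sup>* \<union> C \<times> C"
  proof (rule subrelI)
    fix p q
    assume "(p, q) \<in> (E \<union> link x y)\<^sup>*"
    then show "(p, q) \<in> E\<^sup>* \<union> C \<times> C"
    proof (induction rule: rtrancl_induct)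
      case (step q r)
      have C_closed: "r \<in> C" if "q \<in> C" "(q, r) \<in> E"
        using that unfolding C_def by (auto intro: rtrancl_into_rtrancl)
      have "p \<in> C" if "(p, q) \<in> E\<^sup>*" "q \<in> {x, y}"
        using that symR unfolding C_def by (auto dest: symD)
      with step C_closed show ?case
        unfolding C_def by (auto intro: rtrancl_into_rtrancl)
    qed simp
  qed
  have symR': "sym ((E \<union> link x y)\<^sup>*)"
    using assms(1) by (intro sym_rtrancl sym_Un_link)
  have "(p, x) \<in> (E \<union> link x y)\<^sup>*" if "p \<in> C" for p
  proof -
    have "(x, p) \<in> (E \<union> link x y)\<^sup>* \<or> (y, p) \<in> (E \<union> link x y)\<^sup>*"
      using that rtrancl_mono[of E "E \<union> link x y"] unfolding C_def by auto
    moreover have "(x, y) \<in> (E \<union> link x y)\<^sup>*"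
      by auto
    ultimately show ?thesis
      using symR' by (meson rtrancl_trans symD)
  qed
  then have "C \<times> C \<subseteq> (E \<union> link x y)\<^sup>*"
    using symR' by (auto dest: symD intro: rtrancl_trans)
  then show "E\<^sup>* \<union> C \<times> C \<subseteq> (E \<union> link x y)\<^sup>*"
    using rtrancl_mono[of E "E \<union> link x y"] by auto
qed

lemma n_components_Un_link:
  assumes "finite V" "sym E" "x \<in> V" "y \<in> V"
  shows "n_components V E = n_components V (E \<union> link x y) + of_bool ((x, y) \<notin> E\<^sup>*)"
proof -
  define R where "R = E\<^sup>*"
  define C where "C = R `` {x} \<union> R `` {y}"
  have R': "(E \<union> link x y)\<^sup>* = R \<union> C \<times> C"
    unfolding R_def C_def using assms(2) by (rule rtrancl_Un_link)
  have eqv: "equiv UNIV R"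
    unfolding R_def using assms(2) by (rule equiv_rtrancl)
  show ?thesis
  proof (cases "(x, y) \<in> R")
    case True
    then have "C \<times> C \<subseteq> R"
      using eqv unfolding C_def by (auto simp: equiv_class_eq) (meson equiv_def symD transD)
    then show ?thesis
      using True R' unfolding n_components_def R_def by (simp add: Un_absorb2)
  next
    case False
    define W where "W = V - C"
    have W_class: "R `` {z} \<inter> C = {} \<and> z \<in> R `` {z}" if "z \<in> W" for z
      using that eqv unfolding W_def C_def equiv_def by (auto dest: symD transD refl_onD)
    have x_y_C: "x \<in> C" "y \<in> C"
      using eqv unfolding C_def equiv_def by (auto dest: refl_onD)
    have C_class: "R `` {z} = R `` {x} \<or> R `` {z} = R `` {y}" if "z \<in> C" for z
      using that equiv_class_eq[OF eqv] unfolding C_def by blast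
    have V_classes: "(\<lambda>z. R `` {z}) ` (V \<inter> C) = {R `` {x}, R `` {y}}"
    proof
      show "(\<lambda>z. R `` {z}) ` (V \<inter> C) \<subseteq> {R `` {x}, R `` {y}}"
        using C_class by blast
      show "{R `` {x}, R `` {y}} \<subseteq> (\<lambda>z. R `` {z}) ` (V \<inter> C)"
        using x_y_C assms(3,4) by blast
    qed
    have V'_classes: "(\<lambda>z. (R \<union> C \<times> C) `` {z}) ` (V \<inter> C) = {C}"
      using C_class x_y_C assms(3) unfolding C_def by auto
    have W'_classes: "(\<lambda>z. (R \<union> C \<times> C) `` {z}) ` W = W // R"
      using W_class by (force simp: quotient_eq_image)
    have split: "V = (V \<inter> C) \<union> W"
      unfolding W_def by blast
    have "R `` {x} \<noteq> R `` {y}"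
      using False eqv by (simp add: eq_equiv_class_iff)
    moreover have "R `` {x} \<notin> W // R" "R `` {y} \<notin> W // R" "C \<notin> W // R"
      using W_class unfolding C_def by (auto simp: quotient_def)
    moreover have "finite (W // R)"
      using assms(1) unfolding W_def by (simp add: quotient_eq_image)
    ultimately show ?thesis
      using False unfolding n_components_def R' R_def[symmetric]
      by (subst (1 2) split) (simp add: quotient_eq_image image_Un V_classes V'_classes W'_classes)
  qed
qed

lemma n_components_insert_isolated:
  assumes "finite W" "x \<notin> W" "E \<subseteq> W \<times> W"
  shows "n_components (insert x W) E = n_components W E + 1"
proof -
  have "x \<notin> Domain E"
    using assms(2,3) by auto
  then have "insert x W // E\<^sup>* = insert {x} (W // E\<^sup>*)"
    by (auto simp: quotient_eq_image Not_Domain_rtrancl)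
  moreover have "{x} \<notin> W // E\<^sup>*"
    using assms(2) by (auto simp: quotient_def)
  moreover have "finite (W // E\<^sup>*)"
    using assms(1) by (simp add: quotient_eq_image)
  ultimately show ?thesis
    by (simp add: n_components_def)
qed

definition perfect_matching :: "'a set \<Rightarrow> ('a \<Rightarrow> 'a) \<Rightarrow> bool" where
  "perfect_matching V f \<longleftrightarrow> (\<forall>x\<in>V. f x \<in> V \<and> f x \<noteq> x \<and> f (f x) = x)"

definition matching_edges :: "'a set \<Rightarrow> ('a \<Rightarrow> 'a) \<Rightarrow> ('a \<times> 'a) set" where
  "matching_edges V f = {(x, f x) | x. x \<in> V}"

lemma perfect_matchingD:
  assumes "perfect_matching V f" "x \<in> V"
  shows "f x \<in> V" "f x \<noteq> x" "f (f x) = x"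
  using assms unfolding perfect_matching_def by blast+

lemma matching_edges_iff: "(x, y) \<in> matching_edges V f \<longleftrightarrow> x \<in> V \<and> y = f x"
  by (auto simp: matching_edges_def)

lemma matching_edges_subset: "perfect_matching V f \<Longrightarrow> matching_edges V f \<subseteq> V \<times> V"
  by (auto simp: matching_edges_def perfect_matching_def)

lemma sym_matching_edges: "perfect_matching V f \<Longrightarrow> sym (matching_edges V f)"
  unfolding sym_def matching_edges_iff perfect_matching_def by metis

lemma perfect_matching_remove_pair:
  assumes "perfect_matching V f" "u \<in> V"
  shows "perfect_matching (V - {u, f u}) f"
  unfolding perfect_matching_def
proof
  fix x
  assume x: "x \<in> V - {u, f u}"
  then have "f x \<noteq> u" "f x \<noteq> f u"
    using assms unfolding perfect_matching_def by (metis Diff_iff insertCI)+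
  then show "f x \<in> V - {u, f u} \<and> f x \<noteq> x \<and> f (f x) = x"
    using x assms(1) unfolding perfect_matching_def by simp
qed

lemma matching_edges_remove_pair:
  assumes "perfect_matching V f" "u \<in> V"
  shows "matching_edges V f = matching_edges (V - {u, f u}) f \<union> link u (f u)"
  using assms unfolding perfect_matching_def by (auto simp: matching_edges_iff)

lemma even_card_perfect_matching:
  "finite V \<Longrightarrow> perfect_matching V f \<Longrightarrow> even (card V)"
proof (induction "card V" arbitrary: V rule: less_induct)
  case less
  show ?case
  proof (cases "V = {}")
    case False
    then obtain u where u: "u \<in> V"
      by blast
    then have pair: "{u, f u} \<subseteq> V" "f u \<noteq> u"
      using less.prems(2) by (auto simp: perfect_matching_def)
    then have card: "card V = card (V - {u, f u}) + 2"
      using less.prems(1) card_Diff_subset[of "{u, f u}" V] card_mono[OF less.prems(1) pair(1)]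
      by auto
    have "even (card (V - {u, f u}))"
      using less.hyps[of "V - {u, f u}"] less.prems perfect_matching_remove_pair[OF less.prems(2) u]
      by (simp add: card)
    then show ?thesis
      by (simp add: card)
  qed simp
qed

text \<open>Deleting a vertex u from the 2-regular graph formed by two perfect matchings f, g leaves
  its two neighbours connected. Otherwise the component C of f u in the remaining graph would be
  closed under g and, apart from f u itself, under f; so both card C and card C - 1 would be even.\<close>

lemma perfect_matching_neighbours_connected:
  assumes "finite V" "perfect_matching V f" "perfect_matching V g" "u \<in> V"
  shows "(f u, g u) \<in> (matching_edges (V - {u, f u}) f \<union> matching_edges (V - {u, g u}) g)\<^sup>*"
proof (rule ccontr)
  define P where "P = matching_edges (V - {u, f u}) f \<union> matching_edges (V - {u, g u}) g"
  define C where "C = P\<^sup>* `` {f u}"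
  assume "(f u, g u) \<notin> P\<^sup>*"
  then have gu: "g u \<notin> C"
    unfolding C_def P_def by simp
  have fu: "f u \<in> C" "f u \<noteq> u" "f u \<in> V"
    using assms(2,4) unfolding C_def perfect_matching_def by auto
  have "P \<subseteq> (V - {u}) \<times> (V - {u})"
    using matching_edges_subset[OF perfect_matching_remove_pair[OF assms(2,4)]]
      matching_edges_subset[OF perfect_matching_remove_pair[OF assms(3,4)]]
    unfolding P_def by blast
  then have "P `` (V - {u}) \<subseteq> V - {u}"
    by blast
  then have CV: "C \<subseteq> V - {u}"
    unfolding C_def using fu Image_closed_trancl[of P "V - {u}"] by auto
  have step: "(x, y) \<in> P \<Longrightarrow> x \<in> C \<Longrightarrow> y \<in> C" for x y
    unfolding C_def by (auto intro: rtrancl_into_rtrancl)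
  have "perfect_matching (C - {f u}) f"
    unfolding perfect_matching_def
  proof
    fix x
    assume x: "x \<in> C - {f u}"
    then have xV: "x \<in> V - {u, f u}"
      using CV by blast
    then have "(x, f x) \<in> P"
      by (simp add: P_def matching_edges_iff)
    moreover have "f x \<noteq> f u \<and> f x \<noteq> x \<and> f (f x) = x"
      using perfect_matching_remove_pair[OF assms(2,4)] xV unfolding perfect_matching_def by blast
    ultimately show "f x \<in> C - {f u} \<and> f x \<noteq> x \<and> f (f x) = x"
      using x step by blast
  qed
  moreover have "perfect_matching C g"
    unfolding perfect_matching_def
  proof
    fix x
    assume x: "x \<in> C"
    then have "x \<noteq> g u"
      using gu by blast
    then have xV: "x \<in> V - {u, g u}"
      using x CV by blast
    then have "(x, g x) \<in> P"
      by (simp add: P_def matching_edges_iff)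
    moreover have "g x \<noteq> x \<and> g (g x) = x"
      using assms(3) xV unfolding perfect_matching_def by blast
    ultimately show "g x \<in> C \<and> g x \<noteq> x \<and> g (g x) = x"
      using x step by blast
  qed
  moreover have "finite C"
    using CV assms(1) finite_subset by blast
  ultimately have "even (card (C - {f u}))" "even (card C)"
    using even_card_perfect_matching by blast+
  moreover have "card C = card (C - {f u}) + 1"
    using card_Suc_Diff1[OF \<open>finite C\<close> fu(1)] by simp
  ultimately show False
    by simp
qed

definition rematch :: "'a \<Rightarrow> 'a \<Rightarrow> ('a \<Rightarrow> 'a) \<Rightarrow> 'a \<Rightarrow> 'a" where
  "rematch u v f = (\<lambda>x. if x = u then v else if x = v then u
                        else if x = f u then f v else if x = f v then f u else f x)"

lemma rematch_apply:
  assumes "perfect_matching V f" "u \<in> V" "v \<in> V" "u \<noteq> v"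
  shows "rematch u v f u = v" "rematch u v f v = u"
    "rematch u v f (f u) = f v" "rematch u v f (f v) = f u"
    "x \<notin> {u, v, f u, f v} \<Longrightarrow> rematch u v f x = f x"
  using perfect_matchingD[OF assms(1,2)] perfect_matchingD[OF assms(1,3)] assms(4)
  by (auto simp: rematch_def)

lemma rematch_id: "perfect_matching V f \<Longrightarrow> u \<in> V \<Longrightarrow> f u = v \<Longrightarrow> rematch u v f = f"
  using perfect_matchingD[of V f u] by (auto simp: rematch_def)

lemma perfect_matching_rematch:
  assumes "perfect_matching V f" "u \<in> V" "v \<in> V" "u \<noteq> v"
  shows "perfect_matching V (rematch u v f)"
  unfolding perfect_matching_def
proof
  fix x
  assume x: "x \<in> V"
  note fx = perfect_matchingD[OF assms(1) x]
  show "rematch u v f x \<in> V \<and> rematch u v f x \<noteq> x \<and> rematch u v f (rematch u v f x) = x"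
  proof (cases "x \<in> {u, v, f u, f v}")
    case True
    then show ?thesis
      using rematch_apply[OF assms] perfect_matchingD[OF assms(1,2)] perfect_matchingD[OF assms(1,3)]
        assms(2-4) by auto
  next
    case False
    moreover have "f x \<notin> {u, v, f u, f v}"
      using False fx perfect_matchingD[OF assms(1,2)] perfect_matchingD[OF assms(1,3)] by auto
    ultimately show ?thesis
      using rematch_apply(5)[OF assms] fx by simp
  qed
qed

lemma matching_edges_rematch:
  assumes "perfect_matching V f" "u \<in> V" "v \<in> V" "u \<noteq> v"
  shows "matching_edges V (rematch u v f) \<union> link u (f u) \<union> link v (f v)
       = matching_edges V f \<union> link u v \<union> link (f u) (f v)"
proof -
  note fu = perfect_matchingD[OF assms(1,2)] and fv = perfect_matchingD[OF assms(1,3)]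
  note r = rematch_apply[OF assms]
  have "(x, y) \<in> matching_edges V (rematch u v f) \<union> link u (f u) \<union> link v (f v) \<longleftrightarrow>
        (x, y) \<in> matching_edges V f \<union> link u v \<union> link (f u) (f v)" for x y
  proof (cases "x \<in> {u, v, f u, f v}")
    case True
    have "f u \<noteq> f v"
      using fu fv assms(4) by metis
    with True consider "x = u" | "x = v" | "x = f u" | "x = f v"
      by blast
    then show ?thesis
      using r fu fv assms(2-4) \<open>f u \<noteq> f v\<close> by cases (auto simp: matching_edges_iff)
  next
    case False
    then show ?thesis
      using r(5)[OF False] by (auto simp: matching_edges_iff)
  qed
  then show ?thesis
    by (simp add: set_eq_iff)
qed

lemma n_components_rematch:
  assumes "finite V" "perfect_matching V f" "u \<in> V" "v \<in> V" "u \<noteq> v" "sym X"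
  defines "E \<equiv> matching_edges V f \<union> X" and "E' \<equiv> matching_edges V (rematch u v f) \<union> X"
  shows "n_components V E + of_bool ((u, f u) \<notin> E'\<^sup>*) = n_components V E' + of_bool ((u, v) \<notin> E\<^sup>*)"
proof -
  note fu = perfect_matchingD[OF assms(2,3)] and fv = perfect_matchingD[OF assms(2,4)]
  note r = rematch_apply[OF assms(2-5)]
  have sym: "sym E" "sym E'"
    unfolding E_def E'_def using assms(6) perfect_matching_rematch[OF assms(2-5)]
    by (auto intro: sym_Un sym_matching_edges assms(2))
  have "(f u, u) \<in> E \<union> link u v" "(v, f v) \<in> E \<union> link u v"
    using fu assms(4) unfolding E_def by (auto simp: matching_edges_iff)
  then have "(f u, f v) \<in> (E \<union> link u v)\<^sup>*"
    by (meson UnI2 insertI1 r_into_rtrancl rtrancl_trans)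
  then have "n_components V E
      = n_components V (E \<union> link u v \<union> link (f u) (f v)) + of_bool ((u, v) \<notin> E\<^sup>*)"
    using n_components_Un_link[OF assms(1) sym(1) assms(3,4)]
      n_components_Un_link[OF assms(1) sym_Un_link[OF sym(1)], of "f u" "f v"] fu fv by simp
  moreover have "(v, u) \<in> E' \<union> link u (f u)" "(f u, f v) \<in> E' \<union> link u (f u)"
    using r fu assms(4) unfolding E'_def by (auto simp: matching_edges_iff)
  then have "(v, f v) \<in> (E' \<union> link u (f u))\<^sup>*"
    by (meson UnI2 insertI1 r_into_rtrancl rtrancl_trans)
  then have "n_components V E'
      = n_components V (E' \<union> link u (f u) \<union> link v (f v)) + of_bool ((u, f u) \<notin> E'\<^sup>*)"
    using n_components_Un_link[OF assms(1) sym(2) assms(3) fu(1)]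
      n_components_Un_link[OF assms(1) sym_Un_link[OF sym(2)], of v "f v"] assms(4) fv by simp
  moreover have "E \<union> link u v \<union> link (f u) (f v) = E' \<union> link u (f u) \<union> link v (f v)"
    using matching_edges_rematch[OF assms(2-5)] unfolding E_def E'_def by blast
  ultimately show ?thesis
    by simp
qed

text \<open>Within the component K of u, which contains neither v nor f v, rematch u v f agrees with f
  except at u and f u; so the path from f u to g u avoiding u survives the rematching.\<close>

lemma rematch_old_partner_connected:
  assumes "finite V" "perfect_matching V f" "perfect_matching V g" "u \<in> V" "v \<in> V" "u \<noteq> v"
    and "(u, v) \<notin> (matching_edges V f \<union> matching_edges V g)\<^sup>*"
  shows "(u, f u) \<in> (matching_edges V (rematch u v f) \<union> matching_edges V g)\<^sup>*"
proof -
  define K where "K = (matching_edges V f \<union> matching_edges V g)\<^sup>* `` {u}"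
  have "(matching_edges V f \<union> matching_edges V g) `` V \<subseteq> V"
    using matching_edges_subset[OF assms(2)] matching_edges_subset[OF assms(3)] by blast
  then have KV: "K \<subseteq> V"
    unfolding K_def using assms(4) Image_closed_trancl by blast
  have closed: "f x \<in> K" "g x \<in> K" if "x \<in> K" for x
  proof -
    have "(x, f x) \<in> matching_edges V f \<union> matching_edges V g"
      "(x, g x) \<in> matching_edges V f \<union> matching_edges V g"
      using that KV by (auto simp: matching_edges_iff)
    with that show "f x \<in> K" "g x \<in> K"
      unfolding K_def by (auto intro: rtrancl_into_rtrancl)
  qed
  have pm: "perfect_matching K f" "perfect_matching K g"
    using assms(2,3) KV closed unfolding perfect_matching_def by blast+
  have "u \<in> K" "v \<notin> K" "f v \<notin> K"
    using assms(7) closed(1) perfect_matchingD(3)[OF assms(2,5)] unfolding K_def by force+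
  have "matching_edges (K - {u, f u}) f \<subseteq> matching_edges V (rematch u v f)"
  proof (rule subrelI)
    fix x y
    assume "(x, y) \<in> matching_edges (K - {u, f u}) f"
    then have x: "x \<in> K" "x \<notin> {u, v, f u, f v}" "y = f x"
      using \<open>v \<notin> K\<close> \<open>f v \<notin> K\<close> by (auto simp: matching_edges_iff)
    then show "(x, y) \<in> matching_edges V (rematch u v f)"
      using KV rematch_apply(5)[OF assms(2,4-6) x(2)] by (auto simp: matching_edges_iff)
  qed
  moreover have "matching_edges (K - {u, g u}) g \<subseteq> matching_edges V g"
    using KV by (auto simp: matching_edges_iff)
  ultimately have "(f u, g u) \<in> (matching_edges V (rematch u v f) \<union> matching_edges V g)\<^sup>*"
    using perfect_matching_neighbours_connected[OF finite_subset[OF KV assms(1)] pm \<open>u \<in> K\<close>]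
      rtrancl_mono[of _ "matching_edges V (rematch u v f) \<union> matching_edges V g"] by blast
  moreover have "(g u, u) \<in> matching_edges V g"
    using perfect_matchingD[OF assms(3,4)] by (simp add: matching_edges_iff)
  ultimately have "(f u, u) \<in> (matching_edges V (rematch u v f) \<union> matching_edges V g)\<^sup>*"
    by (meson UnI2 rtrancl.rtrancl_into_rtrancl)
  moreover have "sym (matching_edges V (rematch u v f) \<union> matching_edges V g)"
    using perfect_matching_rematch[OF assms(2,4-6)] assms(3) by (intro sym_Un sym_matching_edges)
  ultimately show ?thesis
    using sym_rtrancl symD by metis
qed

definition kappa_of :: "'a set \<Rightarrow> ('a \<Rightarrow> 'a) set \<Rightarrow> nat" where
  "kappa_of V F = n_components V (\<Union>f\<in>F. matching_edges V f)"

lemma kappa_of_remove_dipole: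
  assumes "finite V" "u \<in> V" "F \<noteq> {}" "\<And>f. f \<in> F \<Longrightarrow> perfect_matching V f \<and> f u = v"
  shows "kappa_of V F = kappa_of (V - {u, v}) F + 1"
proof -
  define W where "W = V - {u, v}"
  define E where "E = (\<Union>f\<in>F. matching_edges W f)"
  have pm: "perfect_matching W f" "matching_edges V f = matching_edges W f \<union> link u v" if "f \<in> F" for f
    using assms(4)[OF that] perfect_matching_remove_pair[OF _ assms(2)]
      matching_edges_remove_pair[OF _ assms(2)] unfolding W_def by blast+
  have v: "v \<in> V" "v \<noteq> u"
    using assms(3,4) perfect_matchingD[OF _ assms(2)] by blast+
  have E: "(\<Union>f\<in>F. matching_edges V f) = E \<union> link u v"
    using pm(2) assms(3) unfolding E_def by blast
  have EW: "E \<subseteq> W \<times> W"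
    using pm(1) matching_edges_subset unfolding E_def by blast
  have "sym E"
    using pm(1) sym_matching_edges unfolding E_def by (blast intro: sym_UNION)
  have "u \<notin> Domain E"
    using EW unfolding W_def by blast
  then have "n_components V E = n_components V (E \<union> link u v) + 1"
    using n_components_Un_link[OF assms(1) \<open>sym E\<close> assms(2) v(1)] v(2) by (simp add: Not_Domain_rtrancl)
  moreover have "V = insert u (insert v W)" "finite W" "u \<notin> insert v W" "v \<notin> W"
    using assms(1,2) v unfolding W_def by auto
  then have "n_components V E = n_components W E + 2"
    using n_components_insert_isolated[of "insert v W" u E] n_components_insert_isolated[of W v E] EW
    by auto
  ultimately show ?thesis
    unfolding kappa_of_def E W_def[symmetric] E_def[symmetric] by simp
qed

text \<open>For the three matchings of colours i, j, k this is 2 (2 kappa_I - chi), where chi is the Euler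
  characteristic of X(G_I): one vertex per component of G_{i,j}, G_{i,k} and G_{j,k},
  3n/2 edges and n triangles.\<close>
definition surface_defect :: "'a set \<Rightarrow> ('a \<Rightarrow> 'a) \<Rightarrow> ('a \<Rightarrow> 'a) \<Rightarrow> ('a \<Rightarrow> 'a) \<Rightarrow> int" where
  "surface_defect V f g h = int (card V) + 4 * int (kappa_of V {f, g, h})
     - 2 * int (kappa_of V {f, g} + kappa_of V {f, h} + kappa_of V {g, h})"

lemma surface_defect_swap: "surface_defect V f g h = surface_defect V g f h"
  by (simp add: surface_defect_def insert_commute add_ac)

lemma surface_defect_remove_dipole:
  assumes "finite V" "u \<in> V" "perfect_matching V f" "perfect_matching V g" "perfect_matching V h"
    and "f u = h u" "g u = h u"
  shows "surface_defect V f g h = surface_defect (V - {u, h u}) f g h"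
proof -
  have "{u, h u} \<subseteq> V" "h u \<noteq> u"
    using assms(2) perfect_matchingD[OF assms(5,2)] by auto
  moreover have "card {u, h u} \<le> card V"
    using assms(1) \<open>{u, h u} \<subseteq> V\<close> by (rule card_mono)
  ultimately have "card V = card (V - {u, h u}) + 2"
    by (simp add: card_Diff_subset)
  moreover have "\<And>F. F \<noteq> {} \<Longrightarrow> F \<subseteq> {f, g, h} \<Longrightarrow> kappa_of V F = kappa_of (V - {u, h u}) F + 1"
    using assms by (intro kappa_of_remove_dipole) blast+
  ultimately show ?thesis
    unfolding surface_defect_def by (simp add: insert_commute)
qed

lemma surface_defect_rematch_le:
  assumes "finite V" "perfect_matching V f" "perfect_matching V g" "perfect_matching V h" "u \<in> V"
  shows "surface_defect V (rematch u (h u) f) g h \<le> surface_defect V f g h"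
proof (cases "f u = h u")
  case True
  then show ?thesis
    using rematch_id[OF assms(2,5)] by simp
next
  case False
  define v where "v = h u"
  define f' where "f' = rematch u v f"
  let ?M = "matching_edges V"
  have v: "v \<in> V" "u \<noteq> v"
    using perfect_matchingD[OF assms(4,5)] unfolding v_def by auto
  have sym: "sym (?M g)" "sym (?M h)"
    using assms(3,4) by (simp_all add: sym_matching_edges)
  have "(u, v) \<in> ?M h"
    using assms(5) unfolding v_def by (simp add: matching_edges_iff)
  then have uv: "(u, v) \<in> (?M f \<union> ?M h)\<^sup>*" "(u, v) \<in> (?M f \<union> (?M g \<union> ?M h))\<^sup>*"
    by auto
  note switch = n_components_rematch[OF assms(1,2,5) v, folded f'_def]
  have "(?M f' \<union> ?M h) `` {u, v} \<subseteq> {u, v}"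
    using rematch_apply(1,2)[OF assms(2,5) v, folded f'_def] perfect_matchingD(3)[OF assms(4,5)]
    unfolding v_def by (auto simp: matching_edges_iff)
  then have "(u, f u) \<notin> (?M f' \<union> ?M h)\<^sup>*"
    using Image_closed_trancl[of "?M f' \<union> ?M h" "{u, v}"] False perfect_matchingD(2)[OF assms(2,5)]
    unfolding v_def by blast
  then have fh: "kappa_of V {f', h} = kappa_of V {f, h} + 1"
    using switch[OF sym(2)] uv by (simp add: kappa_of_def)
  have fgh: "kappa_of V {f', g, h}
      = kappa_of V {f, g, h} + of_bool ((u, f u) \<notin> (?M f' \<union> (?M g \<union> ?M h))\<^sup>*)"
    using switch[OF sym_Un[OF sym]] uv by (simp add: kappa_of_def)
  have fg: "kappa_of V {f, g} + of_bool ((u, f u) \<notin> (?M f' \<union> ?M g)\<^sup>*)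
      = kappa_of V {f', g} + of_bool ((u, v) \<notin> (?M f \<union> ?M g)\<^sup>*)"
    using switch[OF sym(1)] by (simp add: kappa_of_def)
  have "surface_defect V f' g h \<le> surface_defect V f g h"
  proof (cases "(u, f u) \<in> (?M f' \<union> (?M g \<union> ?M h))\<^sup>*")
    case True
    have "kappa_of V {f, g} \<le> kappa_of V {f', g} + 1"
      using fg by (simp add: of_bool_def split: if_splits)
    then show ?thesis
      using fh fgh True unfolding surface_defect_def by simp
  next
    case False
    then have "(u, f u) \<notin> (?M f' \<union> ?M g)\<^sup>*"
      using rtrancl_mono[of "?M f' \<union> ?M g" "?M f' \<union> (?M g \<union> ?M h)"] by blast
    moreover from this have "(u, v) \<in> (?M f \<union> ?M g)\<^sup>*"
      using rematch_old_partner_connected[OF assms(1-3,5) v] unfolding f'_def by blast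
    ultimately have "kappa_of V {f, g} + 1 = kappa_of V {f', g}"
      using fg by simp
    then show ?thesis
      using fh fgh False unfolding surface_defect_def by simp
  qed
  then show ?thesis
    unfolding f'_def v_def .
qed

theorem surface_defect_nonneg:
  "finite V \<Longrightarrow> perfect_matching V f \<Longrightarrow> perfect_matching V g \<Longrightarrow> perfect_matching V h
    \<Longrightarrow> 0 \<le> surface_defect V f g h"
proof (induction "card V" arbitrary: V f g h rule: less_induct)
  case less
  show ?case
  proof (cases "V = {}")
    case True
    then show ?thesis
      by (simp add: surface_defect_def kappa_of_def n_components_def)
  next
    case False
    then obtain u where u: "u \<in> V"
      by blast
    define f' where "f' = rematch u (h u) f"
    define g' where "g' = rematch u (h u) g"
    have v: "h u \<in> V" "u \<noteq> h u"
      using perfect_matchingD[OF less.prems(4) u] by auto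
    have pm: "perfect_matching V f'" "perfect_matching V g'"
      unfolding f'_def g'_def using perfect_matching_rematch[OF _ u v] less.prems(2,3) by blast+
    have at_u: "f' u = h u" "g' u = h u"
      unfolding f'_def g'_def using rematch_apply(1)[OF _ u v] less.prems(2,3) by blast+
    have "perfect_matching (V - {u, h u}) g'" "perfect_matching (V - {u, h u}) f'"
      "perfect_matching (V - {u, h u}) h"
      using perfect_matching_remove_pair[OF pm(2) u] perfect_matching_remove_pair[OF pm(1) u]
        perfect_matching_remove_pair[OF less.prems(4) u] at_u by simp_all
    moreover have "card (V - {u, h u}) < card V" "finite (V - {u, h u})"
      using less.prems(1) u by (auto intro: psubset_card_mono)
    ultimately have "0 \<le> surface_defect (V - {u, h u}) g' f' h"
      using less.hyps by blast
    also have "\<dots> = surface_defect V g' f' h"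
      using surface_defect_remove_dipole[OF less.prems(1) u pm(2,1) less.prems(4) at_u(2,1)] by simp
    also have "\<dots> \<le> surface_defect V g f' h"
      unfolding g'_def using surface_defect_rematch_le[OF less.prems(1,3) pm(1) less.prems(4) u] .
    also have "\<dots> = surface_defect V f' g h"
      by (rule surface_defect_swap)
    also have "\<dots> \<le> surface_defect V f g h"
      unfolding f'_def using surface_defect_rematch_le[OF less.prems(1-4) u] .
    finally show ?thesis .
  qed
qed

lemma kappa_eq_kappa_of: "kappa n m J = kappa_of {1..n} (m ` J)"
proof -
  have "edge_rel n m J = (\<Union>f\<in>m ` J. matching_edges {1..n} f)"
    by (auto simp: edge_rel_def matching_edges_def)
  then show ?thesis
    by (simp add: kappa_def kappa_of_def n_components_def)
qed

theorem lemma1: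
  fixes d n :: nat and m :: "nat \<Rightarrow> nat \<Rightarrow> nat" and I :: "nat set"
  assumes "colourful d n m"
    and "I \<subseteq> {1..d+1}" and "card I = 3"
    and "disjoint_union_of_2spheres (complex_X n m I)"
  shows "\<exists>i\<in>I. \<exists>j\<in>I. i \<noteq> j \<and>
           real (kappa n m {i, j}) - real (kappa n m I) \<le> real n / 6"
proof -
  obtain i j k where I: "I = {i, j, k}" "i \<noteq> j" "j \<noteq> k" "i \<noteq> k"
    using assms(3) unfolding card_3_iff by blast
  have "perfect_matching {1..n} (m c)" if "c \<in> I" for c
    using assms(1,2) that unfolding colourful_def perfect_matching_def by blast
  then have "0 \<le> surface_defect {1..n} (m i) (m j) (m k)"
    using I(1) by (intro surface_defect_nonneg) auto
  then have "2 * (kappa n m {i, j} + kappa n m {i, k} + kappa n m {j, k}) \<le> n + 4 * kappa n m I"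
    unfolding surface_defect_def kappa_eq_kappa_of I(1) by simp
  then have sum: "2 * (real (kappa n m {i, j}) + real (kappa n m {i, k}) + real (kappa n m {j, k}))
      \<le> real n + 4 * real (kappa n m I)"
    by (metis (mono_tags) of_nat_add of_nat_le_iff of_nat_mult of_nat_numeral)
  show ?thesis
  proof (rule ccontr)
    assume "\<not> ?thesis"
    then have "\<forall>a\<in>I. \<forall>b\<in>I. a \<noteq> b \<longrightarrow> real n / 6 < real (kappa n m {a, b}) - real (kappa n m I)"
      by (auto simp: not_le)
    then show False
      using sum I by simp
  qed
qed

end
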